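(* Let $n$ be a positive integer, let $V$ be a set with $|V|=n$, and let $\sigma:[n]\to V$ be a bijection. Let $\mathcal{P}\subseteq P_s(V)$ be a signed-increasing property, and set $d=n-\operatorname{alt}(\mathcal{P},\sigma)-1$. If $d\neq -1$, then there is a map $\varphi:V\to S^d$ (i.e. a multiset $Z=\varphi(V)\subset S^d$ of size $n$ identified with $V$) such that for every $x\in S^d$, $$\bigl(\{v\in V:\varphi(v)\in H(x)\},\ \{v\in V:\varphi(v)\in H(-x)\}\bigr)\in\mathcal{P}.$$ Moreover, if $d\geq 1$, the map $\varphi$ can be chosen injective (so that $Z$ is a set).
   Context: For a positive integer $n$, $[n]=\{1,\dots,n\}$. $S^d\subset\mathbb{R}^{d+1}$ is the unit sphere, and for $x\in S^d$, $H(x)=\{y\in S^d:\langle x,y\rangle>0\}$ is the open hemisphere centered at $x$. For $X=(x_1,\dots,x_n)\in\{+,-,0\}^n$, an alternating subsequence of $X$ is a subsequence $x_{j_1},\dots,x_{j_m}$ ($j_1<\dots<j_m$) of nonzero terms such that consecutive terms have different signs; $\operatorname{alt}(X)$ is the length of a longest alternating subsequence, with $\operatorname{alt}(0,\dots,0)=0$. Set $X^+=\{j:x_j=+\}$, $X^-=\{j:x_j=-\}$. The signed-power set of $V$ is $P_s(V)=\{(A,B):A,B\subseteq V,\ A\cap B=\varnothing\}$, partially ordered by $(A,B)\subseteq(C,D)$ iff $A\subseteq C$ and $B\subseteq D$. A signed-increasing property is a family $\mathcal{P}\subseteq P_s(V)$ such that $F_1\in\mathcal{P}$ and $F_1\subseteq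 F_2\in P_s(V)$ imply $F_2\in\mathcal{P}$. For a bijection $\sigma:[n]\to V$ and $X\in\{+,-,0\}^n$, write $X_\sigma=(\sigma(X^+),\sigma(X^-))\in P_s(V)$, and define $$\operatorname{alt}(\mathcal{P},\sigma)=\max\{\operatorname{alt}(X): X\in\{+,-,0\}^n,\ X_\sigma\notin\mathcal{P}\}.$$ *)

theory Defs
  imports Complex_Main "HOL-Library.Sublist"
begin

datatype sgn = Pos | Neg | Zero

definition alt :: "sgn list \<Rightarrow> nat" where
  "alt X = Max {length ys | ys. subseq ys X \<and> Zero \<notin> set ys \<and> successively (\<noteq>) ys}"

definition signed_pow :: "'a set \<Rightarrow> ('a set \<times> 'a set) set" where
  "signed_pow V = {(A, B). A \<subseteq> V \<and> B \<subseteq> V \<and> A \<inter> B = {}}"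

definition signed_le :: "('a set \<times> 'a set) \<Rightarrow> ('a set \<times> 'a set) \<Rightarrow> bool" where
  "signed_le F1 F2 \<longleftrightarrow> fst F1 \<subseteq> fst F2 \<and> snd F1 \<subseteq> snd F2"

definition signed_increasing :: "'a set \<Rightarrow> ('a set \<times> 'a set) set \<Rightarrow> bool" where
  "signed_increasing V P \<longleftrightarrow> P \<subseteq> signed_pow V \<and>
     (\<forall>F1 \<in> P. \<forall>F2 \<in> signed_pow V. signed_le F1 F2 \<longrightarrow> F2 \<in> P)"

text \<open>X is a list of length n; its entry X!(i-1) is x_i for i in [n].\<close>
definition sig_apply :: "(nat \<Rightarrow> 'a) \<Rightarrow> sgn list \<Rightarrow> ('a set \<times> 'a set)" where
  "sig_apply \<sigma> X = (\<sigma> ` {i \<in> {1..length X}. X ! (i - 1) = Pos},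
                    \<sigma> ` {i \<in> {1..length X}. X ! (i - 1) = Neg})"

text \<open>If no X has X_sigma outside P (i.e. P is all of P_s(V)),
the maximum is over the empty set; we use the convention 0 (any convention
giving d >= 0 is harmless, since then every map works).\<close>
definition alt_P :: "nat \<Rightarrow> ('a set \<times> 'a set) set \<Rightarrow> (nat \<Rightarrow> 'a) \<Rightarrow> nat" where
  "alt_P n P \<sigma> = (let S = {alt X | X. length X = n \<and> sig_apply \<sigma> X \<notin> P}
                   in if S = {} then 0 else Max S)"

definition sphere_pts :: "nat \<Rightarrow> (nat \<Rightarrow> real) set" where
  "sphere_pts d = {x. (\<forall>i>d. x i = 0) \<and> (\<Sum>i\<le>d. (x i)^2) = 1}"

definition inner_d :: "nat \<Rightarrow> (nat \<Rightarrow> real) \<Rightarrow> (nat \<Rightarrow> real) \<Rightarrow> real" where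
  "inner_d d x y = (\<Sum>i\<le>d. x i * y i)"

definition hemi :: "nat \<Rightarrow> (nat \<Rightarrow> real) \<Rightarrow> (nat \<Rightarrow> real) set" where
  "hemi d x = {y \<in> sphere_pts d. inner_d d x y > 0}"

end

theory Submission
  imports Defs
begin

text \<open>Send \<open>\<sigma> (i + 1)\<close> to the normalisation of the vector \<open>((-1)^(i+d) * (i choose j))\<close>,
\<open>j \<le> d\<close>: a moment curve in the binomial basis. For \<open>x \<in> S^d\<close> the signs of the inner products
with these points are those of \<open>(-1)^(i+d) * p i\<close>, where \<open>p t = \<Sum>j\<le>d. x j * (t choose j)\<close> is a
nonzero polynomial of degree at most \<open>d\<close>. Replacing a real sequence by the sums of its neighbours
cannot create longer alternating sign subsequences, and it turns \<open>(-1)^i * p i\<close> into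
\<open>-(-1)^i * (p (i+1) - p i)\<close>, which lowers the degree. By induction on \<open>d\<close>, the sign vector
therefore has an alternating subsequence of length \<open>n - d > alt(P, \<sigma>)\<close>, so the pair of
hemisphere sets it encodes lies in \<open>P\<close>.\<close>

definition sign_of :: "real \<Rightarrow> sgn" where
  "sign_of r = (if r > 0 then Pos else if r < 0 then Neg else Zero)"

lemma sign_of_eq_Zero_iff [simp]: "sign_of r = Zero \<longleftrightarrow> r = 0"
  by (simp add: sign_of_def)

lemma sign_of_neq_uminus: "r \<noteq> 0 \<Longrightarrow> sign_of r \<noteq> sign_of (- r)"
  by (simp add: sign_of_def)

lemma sign_of_add_cases:
  "sign_of (x + y) \<noteq> Zero \<Longrightarrow> sign_of (x + y) = sign_of x \<or> sign_of (x + y) = sign_of y"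
  by (auto simp: sign_of_def)

lemma sign_of_divide_pos: "c > 0 \<Longrightarrow> sign_of (r / c) = sign_of r"
  by (simp add: sign_of_def zero_less_divide_iff divide_less_0_iff)

definition alternating_lengths :: "sgn list \<Rightarrow> nat set" where
  "alternating_lengths X =
     {length ys | ys. subseq ys X \<and> Zero \<notin> set ys \<and> successively (\<noteq>) ys}"

lemma alt_eq_Max_alternating_lengths: "alt X = Max (alternating_lengths X)"
  by (simp add: alt_def alternating_lengths_def)

lemma alternating_lengths_subset: "alternating_lengths X \<subseteq> {..length X}"
  by (auto simp: alternating_lengths_def dest: list_emb_length)

lemma finite_alternating_lengths: "finite (alternating_lengths X)"
  using alternating_lengths_subset finite_subset by blast

lemma zero_in_alternating_lengths: "0 \<in> alternating_lengths X"
  unfolding alternating_lengths_def by force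

lemma alt_le_length: "alt X \<le> length X"
  unfolding alt_eq_Max_alternating_lengths
  using finite_alternating_lengths[of X] zero_in_alternating_lengths[of X]
    alternating_lengths_subset[of X]
  by (intro Max.boundedI) auto

lemma alt_mono:
  assumes "\<And>ys. subseq ys X \<Longrightarrow> Zero \<notin> set ys \<Longrightarrow> successively (\<noteq>) ys \<Longrightarrow> subseq ys Y"
  shows "alt X \<le> alt Y"
  unfolding alt_eq_Max_alternating_lengths
proof (rule Max_mono)
  show "alternating_lengths X \<subseteq> alternating_lengths Y"
    using assms unfolding alternating_lengths_def by blast
qed (use zero_in_alternating_lengths finite_alternating_lengths in auto)

lemma length_le_alt: "Zero \<notin> set X \<Longrightarrow> successively (\<noteq>) X \<Longrightarrow> length X \<le> alt X"
  unfolding alt_eq_Max_alternating_lengths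
  by (rule Max_ge[OF finite_alternating_lengths]) (auto simp: alternating_lengths_def)

fun adjacent_sums :: "real list \<Rightarrow> real list" where
  "adjacent_sums (x # y # r) = (x + y) # adjacent_sums (y # r)"
| "adjacent_sums _ = []"

lemma length_adjacent_sums [simp]: "length (adjacent_sums xs) = length xs - 1"
  by (induction xs rule: adjacent_sums.induct) auto

lemma nth_adjacent_sums: "Suc i < length xs \<Longrightarrow> adjacent_sums xs ! i = xs ! i + xs ! Suc i"
  by (induction xs arbitrary: i rule: adjacent_sums.induct) (auto simp: nth_Cons split: nat.split)

text \<open>An alternating sign pattern seen in the sums of neighbours is already seen in the summands:
a nonzero sum has the sign of one of its two summands, and when it is the second summand, the next
letter of the pattern (having the opposite sign) cannot come from the same position.\<close>
lemma alternating_subseq_adjacent_sums: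
  assumes "subseq ys (map sign_of (adjacent_sums as))" "Zero \<notin> set ys" "successively (\<noteq>) ys"
  shows "subseq ys (map sign_of as)"
  using assms
proof (induction as arbitrary: ys rule: adjacent_sums.induct)
  case (1 x y r)
  show ?case
  proof (cases ys)
    case (Cons z zs)
    have zs: "Zero \<notin> set zs" "successively (\<noteq>) zs"
      using "1.prems"(2,3) Cons by (auto simp: successively_Cons)
    show ?thesis
    proof (cases "z = sign_of (x + y)")
      case False
      then have "subseq ys (map sign_of (adjacent_sums (y # r)))"
        using "1.prems"(1) Cons by simp
      then have "subseq ys (map sign_of (y # r))"
        using "1.IH" "1.prems"(2,3) by blast
      then show ?thesis
        by (simp add: list_emb_Cons)
    next
      case True
      have zs_tail: "subseq zs (sign_of y # map sign_of r)"
        using "1.IH"[OF _ zs] "1.prems"(1) Cons True by simp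
      have "z \<noteq> Zero"
        using "1.prems"(2) Cons by auto
      with sign_of_add_cases[of x y] True
      consider "z = sign_of x" | "z = sign_of y"
        by auto
      then show ?thesis
      proof cases
        case 1
        then show ?thesis
          using Cons zs_tail by simp
      next
        case 2
        then have "subseq zs (map sign_of r)"
          using zs_tail "1.prems"(3) Cons by (cases zs) auto
        then have "subseq ys (map sign_of (y # r))"
          using Cons 2 by simp
        then show ?thesis
          by (simp add: list_emb_Cons)
      qed
    qed
  qed simp
qed auto

lemma alt_adjacent_sums_le: "alt (map sign_of (adjacent_sums as)) \<le> alt (map sign_of as)"
  by (rule alt_mono) (rule alternating_subseq_adjacent_sums)

definition binom_poly :: "(nat \<Rightarrow> real) \<Rightarrow> nat \<Rightarrow> nat \<Rightarrow> real" where
  "binom_poly x D i = (\<Sum>j\<le>D. x j * real (i choose j))"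

lemma binom_poly_Suc_diff:
  "binom_poly x (Suc D) (Suc i) - binom_poly x (Suc D) i = binom_poly (\<lambda>j. x (Suc j)) D i"
proof -
  have "binom_poly x (Suc D) (Suc i) - binom_poly x (Suc D) i =
      (\<Sum>j\<le>Suc D. x j * (real (Suc i choose j) - real (i choose j)))"
    unfolding binom_poly_def by (simp add: sum_subtractf algebra_simps)
  also have "\<dots> = (\<Sum>j\<le>D. x (Suc j) * (real (Suc i choose Suc j) - real (i choose Suc j)))"
    by (subst sum.atMost_Suc_shift) simp
  also have "\<dots> = binom_poly (\<lambda>j. x (Suc j)) D i"
    unfolding binom_poly_def by simp
  finally show ?thesis .
qed

lemma binom_poly_eq_const:
  assumes "\<forall>j\<in>{1..D}. x j = 0"
  shows "binom_poly x D i = x 0"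
proof -
  have "binom_poly x D i = (\<Sum>j\<in>{0}. x j * real (i choose j))"
    unfolding binom_poly_def using assms by (intro sum.mono_neutral_right) auto
  then show ?thesis
    by simp
qed

definition signed_values :: "(nat \<Rightarrow> real) \<Rightarrow> nat \<Rightarrow> nat \<Rightarrow> real list" where
  "signed_values x D n = map (\<lambda>i. (-1) ^ (i + D) * binom_poly x D i) [0..<n]"

lemma length_signed_values [simp]: "length (signed_values x D n) = n"
  by (simp add: signed_values_def)

lemma nth_signed_values:
  "i < n \<Longrightarrow> signed_values x D n ! i = (-1) ^ (i + D) * binom_poly x D i"
  by (simp add: signed_values_def)

lemma adjacent_sums_signed_values:
  "adjacent_sums (signed_values x (Suc D) (Suc m)) = signed_values (\<lambda>j. x (Suc j)) D m"
proof (rule nth_equalityI)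
  fix i
  assume "i < length (adjacent_sums (signed_values x (Suc D) (Suc m)))"
  then have i: "i < m"
    by simp
  have "adjacent_sums (signed_values x (Suc D) (Suc m)) ! i =
      (-1) ^ (i + D) * (binom_poly x (Suc D) (Suc i) - binom_poly x (Suc D) i)"
    using i by (simp add: nth_adjacent_sums nth_signed_values algebra_simps)
  also have "\<dots> = signed_values (\<lambda>j. x (Suc j)) D m ! i"
    using i by (simp add: binom_poly_Suc_diff nth_signed_values)
  finally show "adjacent_sums (signed_values x (Suc D) (Suc m)) ! i =
      signed_values (\<lambda>j. x (Suc j)) D m ! i" .
qed simp

lemma alt_signed_values_const:
  assumes "x 0 \<noteq> 0" and "\<forall>j\<in>{1..D}. x j = 0"
  shows "n \<le> alt (map sign_of (signed_values x D n))"
proof -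
  let ?X = "map sign_of (signed_values x D n)"
  have entries: "signed_values x D n ! i = (-1) ^ (i + D) * x 0" if "i < n" for i
    using that assms(2) by (simp add: nth_signed_values binom_poly_eq_const)
  have "Zero \<notin> set ?X"
    using assms(1) by (auto simp: in_set_conv_nth entries eq_commute[of Zero])
  moreover have "successively (\<noteq>) ?X"
    unfolding successively_conv_nth
    using assms(1) sign_of_neq_uminus[of "(-1) ^ (i + D) * x 0" for i] by (auto simp: entries)
  ultimately show ?thesis
    using length_le_alt by fastforce
qed

lemma alt_signed_values_ge:
  assumes "\<exists>j\<le>D. x j \<noteq> 0"
  shows "n \<le> alt (map sign_of (signed_values x D n)) + D"
  using assms
proof (induction D arbitrary: x n)
  case 0
  then show ?case
    using alt_signed_values_const[of x 0 n] by simp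
next
  case (Suc D)
  show ?case
  proof (cases "\<exists>j\<le>D. x (Suc j) \<noteq> 0")
    case True
    have IH: "m \<le> alt (map sign_of (signed_values (\<lambda>j. x (Suc j)) D m)) + D" for m
      using Suc.IH[of "\<lambda>j. x (Suc j)" m] True by simp
    show ?thesis
    proof (cases n)
      case (Suc m)
      have "alt (map sign_of (signed_values (\<lambda>j. x (Suc j)) D m))
          \<le> alt (map sign_of (signed_values x (Suc D) n))"
        using alt_adjacent_sums_le[of "signed_values x (Suc D) n"]
        by (simp add: Suc adjacent_sums_signed_values)
      then show ?thesis
        using IH[of m] Suc by simp
    qed simp
  next
    case False
    have tail: "\<forall>j\<in>{1..Suc D}. x j = 0"
    proof
      fix j
      assume "j \<in> {1..Suc D}"
      then obtain k where "j = Suc k" "k \<le> D"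
        by (cases j) auto
      then show "x j = 0"
        using False by auto
    qed
    obtain j where "j \<le> Suc D" "x j \<noteq> 0"
      using Suc.prems by blast
    with tail have "x 0 \<noteq> 0"
      by (cases j) auto
    with tail show ?thesis
      using alt_signed_values_const[of x "Suc D" n] by simp
  qed
qed

definition binom_norm :: "nat \<Rightarrow> nat \<Rightarrow> real" where
  "binom_norm D i = sqrt (\<Sum>j\<le>D. (real (i choose j))\<^sup>2)"

definition moment_point :: "nat \<Rightarrow> nat \<Rightarrow> nat \<Rightarrow> real" where
  "moment_point D i = (\<lambda>j. if j \<le> D then (-1) ^ (i + D) * real (i choose j) / binom_norm D i else 0)"

lemma binom_norm_pos: "binom_norm D i > 0"
proof -
  have "(\<Sum>j\<in>{0}. (real (i choose j))\<^sup>2) \<le> (\<Sum>j\<le>D. (real (i choose j))\<^sup>2)"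
    by (rule sum_mono2) auto
  then show ?thesis
    unfolding binom_norm_def by simp
qed

lemma moment_point_in_sphere: "moment_point D i \<in> sphere_pts D"
proof -
  have "(\<Sum>j\<le>D. (moment_point D i j)\<^sup>2) = (\<Sum>j\<le>D. (real (i choose j))\<^sup>2) / (binom_norm D i)\<^sup>2"
    unfolding moment_point_def sum_divide_distrib
    by (intro sum.cong refl) (simp add: power_mult_distrib power_divide flip: power_mult)
  also have "\<dots> = 1"
    using binom_norm_pos[of D i] unfolding binom_norm_def by simp
  finally show ?thesis
    unfolding sphere_pts_def by (simp add: moment_point_def)
qed

lemma sign_of_inner_moment_point:
  "sign_of (inner_d D x (moment_point D i)) = sign_of ((-1) ^ (i + D) * binom_poly x D i)"
proof -
  have "inner_d D x (moment_point D i) = (-1) ^ (i + D) * binom_poly x D i / binom_norm D i"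
    unfolding inner_d_def moment_point_def binom_poly_def
    by (simp add: sum_divide_distrib sum_distrib_left algebra_simps)
  then show ?thesis
    using binom_norm_pos sign_of_divide_pos by simp
qed

text \<open>The first two coordinates of \<open>moment_point D i\<close> are in the ratio \<open>1 : i\<close>.\<close>
lemma inj_moment_point:
  assumes "1 \<le> D"
  shows "inj (moment_point D)"
proof
  fix i i'
  assume eq: "moment_point D i = moment_point D i'"
  have coord1: "moment_point D k 1 = moment_point D k 0 * real k" for k
    using assms by (simp add: moment_point_def)
  have "moment_point D i 0 \<noteq> 0"
    using binom_norm_pos[of D i] by (simp add: moment_point_def)
  moreover have "moment_point D i 0 * real i = moment_point D i 0 * real i'"
    using coord1[of i] coord1[of i'] eq by simp
  ultimately show "i = i'"
    by simp
qed

lemma mem_hemi_iff: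
  "y \<in> sphere_pts D \<Longrightarrow> y \<in> hemi D x \<longleftrightarrow> sign_of (inner_d D x y) = Pos"
  by (auto simp: hemi_def sign_of_def)

lemma mem_hemi_uminus_iff:
  "y \<in> sphere_pts D \<Longrightarrow> y \<in> hemi D (\<lambda>i. - x i) \<longleftrightarrow> sign_of (inner_d D x y) = Neg"
  by (auto simp: hemi_def sign_of_def inner_d_def sum_negf)

lemma sphere_pts_nonzero:
  assumes "x \<in> sphere_pts D"
  shows "\<exists>j\<le>D. x j \<noteq> 0"
proof (rule ccontr)
  assume "\<not> (\<exists>j\<le>D. x j \<noteq> 0)"
  then have "(\<Sum>j\<le>D. (x j)\<^sup>2) = 0"
    by simp
  with assms show False
    by (simp add: sphere_pts_def)
qed

lemma image_Collect_bij_betw: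
  assumes "bij_betw f A B"
  shows "f ` {a\<in>A. Q a} = {b\<in>B. Q (inv_into A f b)}"
proof
  show "f ` {a\<in>A. Q a} \<subseteq> {b\<in>B. Q (inv_into A f b)}"
  proof
    fix b
    assume "b \<in> f ` {a\<in>A. Q a}"
    then obtain a where "a \<in> A" "Q a" "b = f a"
      by blast
    then show "b \<in> {b\<in>B. Q (inv_into A f b)}"
      using assms bij_betw_apply bij_betw_inv_into_left by fastforce
  qed
  show "{b\<in>B. Q (inv_into A f b)} \<subseteq> f ` {a\<in>A. Q a}"
  proof
    fix b
    assume b: "b \<in> {b\<in>B. Q (inv_into A f b)}"
    then have "inv_into A f b \<in> {a\<in>A. Q a}"
      using assms bij_betw_apply bij_betw_inv_into by fastforce
    moreover have "b = f (inv_into A f b)"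
      using assms b bij_betw_inv_into_right by fastforce
    ultimately show "b \<in> f ` {a\<in>A. Q a}"
      by (rule rev_image_eqI)
  qed
qed

lemma sig_apply_bij_betw:
  assumes "bij_betw \<sigma> {1..length X} V"
  shows "sig_apply \<sigma> X =
    ({v\<in>V. X ! (inv_into {1..length X} \<sigma> v - 1) = Pos},
     {v\<in>V. X ! (inv_into {1..length X} \<sigma> v - 1) = Neg})"
  unfolding sig_apply_def image_Collect_bij_betw[OF assms] ..

lemma alt_P_le: "alt_P n P \<sigma> \<le> n"
  and alt_le_alt_P: "length X = n \<Longrightarrow> sig_apply \<sigma> X \<notin> P \<Longrightarrow> alt X \<le> alt_P n P \<sigma>"
proof -
  let ?S = "{alt X | X. length X = n \<and> sig_apply \<sigma> X \<notin> P}"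
  have "?S \<subseteq> {..n}"
    using alt_le_length by fastforce
  then have "finite ?S"
    using finite_subset by blast
  show "alt_P n P \<sigma> \<le> n"
    using \<open>?S \<subseteq> {..n}\<close> \<open>finite ?S\<close> by (auto simp: alt_P_def Let_def Max_le_iff)
  show "alt X \<le> alt_P n P \<sigma>" if "length X = n" "sig_apply \<sigma> X \<notin> P"
    using that \<open>finite ?S\<close> by (auto simp: alt_P_def Let_def intro: Max_ge)
qed

definition moment_embedding :: "nat \<Rightarrow> nat \<Rightarrow> (nat \<Rightarrow> 'a) \<Rightarrow> 'a \<Rightarrow> nat \<Rightarrow> real" where
  "moment_embedding D n \<sigma> v = moment_point D (inv_into {1..n} \<sigma> v - 1)"

lemma moment_embedding_in_sphere: "moment_embedding D n \<sigma> v \<in> sphere_pts D"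
  unfolding moment_embedding_def by (rule moment_point_in_sphere)

lemma inj_on_moment_embedding:
  assumes "bij_betw \<sigma> {1..n} V" and "1 \<le> D"
  shows "inj_on (moment_embedding D n \<sigma>) V"
proof -
  have "inj_on (inv_into {1..n} \<sigma>) V"
    using bij_betw_inv_into[OF assms(1)] by (rule bij_betw_imp_inj_on)
  moreover have "inj_on (\<lambda>i. i - 1) (inv_into {1..n} \<sigma> ` V)"
    using bij_betw_imp_surj_on[OF bij_betw_inv_into[OF assms(1)]] by (auto intro!: inj_on_diff_nat)
  ultimately have "inj_on ((\<lambda>i. i - 1) \<circ> inv_into {1..n} \<sigma>) V"
    by (rule comp_inj_on)
  then have "inj_on (moment_point D \<circ> ((\<lambda>i. i - 1) \<circ> inv_into {1..n} \<sigma>)) V"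
    using inj_moment_point[OF assms(2)] by (rule comp_inj_on[OF _ inj_on_subset]) simp
  then show ?thesis
    by (simp add: moment_embedding_def[abs_def] comp_def)
qed

lemma sig_apply_signed_values_eq_hemispheres:
  assumes "bij_betw \<sigma> {1..n} V"
  shows "sig_apply \<sigma> (map sign_of (signed_values x D n)) =
    ({v\<in>V. moment_embedding D n \<sigma> v \<in> hemi D x},
     {v\<in>V. moment_embedding D n \<sigma> v \<in> hemi D (\<lambda>i. - x i)})"
proof -
  let ?Y = "map sign_of (signed_values x D n)"
  let ?\<phi> = "moment_embedding D n \<sigma>"
  have Y_nth: "?Y ! (inv_into {1..n} \<sigma> v - 1) = sign_of (inner_d D x (?\<phi> v))" if "v \<in> V" for v
  proof -
    have "inv_into {1..n} \<sigma> v \<in> {1..n}"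
      using bij_betw_apply[OF bij_betw_inv_into[OF assms] that] .
    then have "inv_into {1..n} \<sigma> v - 1 < n"
      by auto
    then show ?thesis
      by (simp add: moment_embedding_def nth_signed_values sign_of_inner_moment_point)
  qed
  have pos: "?Y ! (inv_into {1..n} \<sigma> v - 1) = Pos \<longleftrightarrow> ?\<phi> v \<in> hemi D x" if "v \<in> V" for v
    using Y_nth[OF that] by (simp add: mem_hemi_iff[OF moment_embedding_in_sphere])
  have neg: "?Y ! (inv_into {1..n} \<sigma> v - 1) = Neg \<longleftrightarrow> ?\<phi> v \<in> hemi D (\<lambda>i. - x i)"
    if "v \<in> V" for v
    using Y_nth[OF that] by (simp add: mem_hemi_uminus_iff[OF moment_embedding_in_sphere])
  have "sig_apply \<sigma> ?Y =
      ({v\<in>V. ?Y ! (inv_into {1..n} \<sigma> v - 1) = Pos}, {v\<in>V. ?Y ! (inv_into {1..n} \<sigma> v - 1) = Neg})"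
    using sig_apply_bij_betw[of \<sigma> ?Y V] assms by simp
  also have "\<dots> = ({v\<in>V. ?\<phi> v \<in> hemi D x}, {v\<in>V. ?\<phi> v \<in> hemi D (\<lambda>i. - x i)})"
    using pos neg by blast
  finally show ?thesis .
qed

theorem lemma1:
  fixes n :: nat and V :: "'a set" and \<sigma> :: "nat \<Rightarrow> 'a"
    and P :: "('a set \<times> 'a set) set" and d :: int
  assumes "n > 0" and "finite V" and "card V = n"
    and "bij_betw \<sigma> {1..n} V"
    and "signed_increasing V P"
    and "d = int n - int (alt_P n P \<sigma>) - 1"
    and "d \<noteq> -1"
  shows "\<exists>\<phi> :: 'a \<Rightarrow> (nat \<Rightarrow> real).
           (\<forall>v\<in>V. \<phi> v \<in> sphere_pts (nat d)) \<and>
           (\<forall>x\<in>sphere_pts (nat d).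
              ({v\<in>V. \<phi> v \<in> hemi (nat d) x}, {v\<in>V. \<phi> v \<in> hemi (nat d) (\<lambda>i. - x i)}) \<in> P) \<and>
           (d \<ge> 1 \<longrightarrow> inj_on \<phi> V)"
proof -
  define D where "D = nat d"
  have n_eq: "n = D + alt_P n P \<sigma> + 1"
    using assms(6,7) alt_P_le[of n P \<sigma>] unfolding D_def by linarith
  let ?\<phi> = "moment_embedding D n \<sigma>"
  have "({v\<in>V. ?\<phi> v \<in> hemi D x}, {v\<in>V. ?\<phi> v \<in> hemi D (\<lambda>i. - x i)}) \<in> P"
    if "x \<in> sphere_pts D" for x
  proof (rule ccontr)
    let ?Y = "map sign_of (signed_values x D n)"
    assume "({v\<in>V. ?\<phi> v \<in> hemi D x}, {v\<in>V. ?\<phi> v \<in> hemi D (\<lambda>i. - x i)}) \<notin> P"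
    then have "alt ?Y \<le> alt_P n P \<sigma>"
      using alt_le_alt_P[of ?Y n \<sigma> P] sig_apply_signed_values_eq_hemispheres[OF assms(4)] by simp
    moreover have "n \<le> alt ?Y + D"
      using alt_signed_values_ge sphere_pts_nonzero[OF that] by blast
    ultimately show False
      using n_eq by linarith
  qed
  moreover have "d \<ge> 1 \<longrightarrow> inj_on ?\<phi> V"
    using inj_on_moment_embedding[OF assms(4)] unfolding D_def by simp
  ultimately show ?thesis
    unfolding D_def[symmetric] by (intro exI[of _ ?\<phi>] conjI ballI moment_embedding_in_sphere)
qed

end
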